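(* For every integer $N\ge3$ and every integer $w$ with $\gcd(w,N)=1$, \[ \frac1{N^2}\sum_{h=1}^{N-1}\frac{\cot^2(\pi hw/N)}{h^2}>\frac1{6N^2}. \] *)

theory Defs
  imports Complex_Main
begin

end

theory Submission
  imports Defs "HOL-Number_Theory.Cong" "HOL-Analysis.Complex_Transcendental"
begin

text \<open>Let \<open>h\<close> be the inverse of \<open>w\<close> modulo \<open>N\<close>. The terms \<open>h\<close> and \<open>N - h\<close> are distinct and
  both equal \<open>cot (\<pi>/N)\<^sup>2\<close> over their squared index, since \<open>h w \<equiv> \<plusminus>1 (mod N)\<close>.
  Now \<open>cot (\<pi>/N) \<ge> N/(2\<pi>)\<close> and \<open>1/h\<^sup>2 + 1/(N - h)\<^sup>2 \<ge> 8/N\<^sup>2\<close>, so these two terms alone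
  contribute at least \<open>2/\<pi>\<^sup>2 > 1/6\<close> to the sum.\<close>

lemma cot_add_of_int_mult_pi: "cot (x + of_int k * pi) = cot x"
  by (simp add: cot_altdef)

lemma cot_pi_mult_div_cong:
  fixes a b N :: int
  assumes "[a = b] (mod N)" and "N \<noteq> 0"
  shows "cot (pi * of_int a / of_int N) = cot (pi * of_int b / of_int N)"
proof -
  obtain k where "a = b + N * k"
    using assms(1) cong_sym cong_iff_lin by blast
  then have "pi * of_int a / of_int N = pi * of_int b / of_int N + of_int k * pi"
    using assms(2) by (simp add: field_simps)
  then show ?thesis
    by (simp add: cot_add_of_int_mult_pi)
qed

lemma modular_inverse_in_range:
  fixes w N :: int
  assumes "N \<ge> 3" and "coprime w N"
  obtains h where "h \<in> {1..N-1}" and "N - h \<noteq> h" and "[h * w = 1] (mod N)"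
proof -
  obtain x where "[w * x = 1] (mod N)"
    using cong_solve_coprime_int assms(2) by blast
  define h where "h = x mod N"
  have "[h * w = x * w] (mod N)"
    unfolding h_def by (intro cong_scalar_right) simp
  then have inverse: "[h * w = 1] (mod N)"
    using \<open>[w * x = 1] (mod N)\<close> by (metis cong_trans mult.commute)
  have "h \<noteq> 0"
  proof
    assume "h = 0"
    then have "N dvd 1"
      using inverse cong_dvd_iff by fastforce
    then show False
      using assms(1) by simp
  qed
  moreover have "0 \<le> h" "h < N"
    using assms(1) unfolding h_def by auto
  ultimately have "h \<in> {1..N-1}"
    by auto
  moreover have "N - h \<noteq> h"
  proof
    assume "N - h = h"
    then have "N * w = 2 * (h * w)"
      by (simp add: algebra_simps)
    then have "[N * w = 2] (mod N)"
      using cong_scalar_left[OF inverse, of 2] by (metis mult_1_right)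
    then have "N dvd 2"
      using cong_dvd_iff by fastforce
    then show False
      using assms(1) zdvd_imp_le by fastforce
  qed
  ultimately show ?thesis
    using that inverse by blast
qed

lemma cot_ge_inverse_double:
  assumes "0 < x" and "x \<le> pi / 3"
  shows "1 / (2 * x) \<le> cot x"
proof -
  have "1 / 2 \<le> cos x"
    using cos_monotone_0_pi_le[of x "pi / 3"] assms by (simp add: cos_60)
  moreover have "0 < sin x" "sin x \<le> x"
    using assms sin_gt_zero[of x] sin_x_le_x[of x] pi_gt3 by auto
  ultimately have "(1 / 2) / x \<le> cos x / x" "cos x / x \<le> cos x / sin x"
    using assms(1) by (intro divide_right_mono divide_left_mono; simp)+
  then show ?thesis
    by (simp add: cot_def)
qed

lemma cot_pi_div_squared_ge:
  fixes n :: real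
  assumes "3 \<le> n"
  shows "n\<^sup>2 / (4 * pi\<^sup>2) \<le> (cot (pi / n))\<^sup>2"
proof -
  have "pi / n \<le> pi / 3"
    using assms by (intro divide_left_mono) auto
  then have "1 / (2 * (pi / n)) \<le> cot (pi / n)"
    using assms by (intro cot_ge_inverse_double) auto
  then have "(1 / (2 * (pi / n)))\<^sup>2 \<le> (cot (pi / n))\<^sup>2"
    using assms by (intro power_mono) auto
  then show ?thesis
    by (simp add: power_divide power_mult_distrib)
qed

lemma inverse_squares_sum_ge:
  fixes a b :: real
  assumes "0 < a" and "0 < b"
  shows "8 / (a + b)\<^sup>2 \<le> 1 / a\<^sup>2 + 1 / b\<^sup>2"
proof -
  have "2 / (a * b) \<le> 1 / a\<^sup>2 + 1 / b\<^sup>2"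
  proof -
    have "1 / a\<^sup>2 + 1 / b\<^sup>2 - 2 / (a * b) = (1 / a - 1 / b)\<^sup>2"
      using assms by (simp add: power2_eq_square field_simps)
    then show ?thesis
      using zero_le_power2[of "1 / a - 1 / b"] by linarith
  qed
  moreover have "4 * (a * b) \<le> (a + b)\<^sup>2"
    using zero_le_power2[of "a - b"] by (simp add: power2_eq_square algebra_simps)
  then have "8 / (a + b)\<^sup>2 \<le> 2 / (a * b)"
    using assms by (simp add: field_simps)
  ultimately show ?thesis
    by linarith
qed

lemma pi_squared_less_12: "pi\<^sup>2 < 12"
proof -
  have "pi * pi \<le> 3.2 * 3.2"
    using pi_approx(2) pi_gt_zero by (intro mult_mono) auto
  then show ?thesis
    unfolding power2_eq_square by linarith
qed

lemma cot_squared_pi_mult_div_eq: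
  fixes h w N :: int
  assumes "[h * w = 1] (mod N) \<or> [h * w = - 1] (mod N)" and "N \<noteq> 0"
  shows "(cot (pi * of_int h * of_int w / of_int N))\<^sup>2 = (cot (pi / of_int N))\<^sup>2"
  using assms cot_pi_mult_div_cong[of "h * w" _ N] by (auto simp: mult.assoc)

lemma sum_cot_squared_div_squares_gt:
  fixes N w :: int
  assumes "N \<ge> 3" and "coprime w N"
  shows "1 / 6 < (\<Sum>h=1..N-1. (cot (pi * of_int h * of_int w / of_int N))\<^sup>2 / (of_int h)\<^sup>2)"
proof -
  define f where "f h = (cot (pi * of_int h * of_int w / of_int N))\<^sup>2 / (of_int h)\<^sup>2" for h :: int
  define c where "c = (cot (pi / of_int N))\<^sup>2"
  obtain h where h: "h \<in> {1..N-1}" "N - h \<noteq> h" and inverse: "[h * w = 1] (mod N)"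
    using modular_inverse_in_range assms by blast
  have "[N * w - h * w = 0 - 1] (mod N)"
    using cong_diff[OF cong_mult_self_left inverse] .
  then have "[(N - h) * w = - 1] (mod N)"
    by (simp add: left_diff_distrib)
  then have f_pair: "f h = c / (of_int h)\<^sup>2" "f (N - h) = c / (of_int (N - h))\<^sup>2"
    using inverse assms(1) cot_squared_pi_mult_div_eq[of h w N] cot_squared_pi_mult_div_eq[of "N - h" w N]
    unfolding f_def c_def by simp_all
  have "(of_int N)\<^sup>2 / (4 * pi\<^sup>2) \<le> c"
    using cot_pi_div_squared_ge assms(1) unfolding c_def by simp
  moreover have "8 / (real_of_int N)\<^sup>2 \<le> 1 / (of_int h)\<^sup>2 + 1 / (of_int (N - h))\<^sup>2"
    using inverse_squares_sum_ge[of "of_int h" "of_int (N - h)"] h(1) by simp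
  ultimately have "(of_int N)\<^sup>2 / (4 * pi\<^sup>2) * (8 / (of_int N)\<^sup>2)
      \<le> c * (1 / (of_int h)\<^sup>2 + 1 / (of_int (N - h))\<^sup>2)"
    by (rule mult_mono) (simp_all add: c_def)
  also have "\<dots> = f h + f (N - h)"
    using f_pair by (simp add: distrib_left)
  also have "\<dots> = sum f {h, N - h}"
    using h(2) by simp
  also have "\<dots> \<le> sum f {1..N-1}"
    using h by (intro sum_mono2) (auto simp: f_def)
  finally have "2 / pi\<^sup>2 \<le> sum f {1..N-1}"
    using assms(1) by simp
  moreover have "1 / 6 < 2 / pi\<^sup>2"
    using pi_squared_less_12 by (simp add: field_simps)
  ultimately show ?thesis
    unfolding f_def by linarith
qed

theorem lemma2:
  fixes N w :: int
  assumes "N \<ge> 3" and "gcd w N = 1"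
  shows "(1 / (of_int N)^2) * (\<Sum>h=1..N-1. (cot (pi * of_int h * of_int w / of_int N))^2 / (of_int h)^2)
           > 1 / (6 * (of_int N)^2)"
proof -
  have "coprime w N"
    using assms(2) by (simp add: coprime_iff_gcd_eq_1)
  then have "1 / (of_int N)\<^sup>2 * (1 / 6) < 1 / (of_int N)\<^sup>2 *
      (\<Sum>h=1..N-1. (cot (pi * of_int h * of_int w / of_int N))\<^sup>2 / (of_int h)\<^sup>2)"
    using assms(1) sum_cot_squared_div_squares_gt by (intro mult_strict_left_mono) auto
  then show ?thesis
    by (simp add: mult.commute)
qed

end
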